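(* Let $\mathcal{K}$ be a discrete index set and, for each $k\in\mathcal{K}$, let $\Theta_k\subseteq\mathbb{R}^{n_k}$. Let $\pi$ be a probability distribution on $\mathcal{X}=\bigcup_{k\in\mathcal{K}}(\{k\}\times\Theta_k)$ with density $\pi(\mathbf{x})=\pi(k)\pi_k(\boldsymbol\theta_k)$, where $\pi(k)$ is the marginal probability of $k$ and $\pi_k$ the conditional density. Let $\nu$ be a univariate reference distribution with density, and for each $k$ let $T_k:\mathbb{R}^{n_k}\to\mathbb{R}^{n_k}$ be a diffeomorphism with $T_k\sharp\pi_k=\otimes_{n_k}\nu$. Consider RJMCMC across-model proposals from $(k,\boldsymbol\theta_k)$ to $(k',\boldsymbol\theta'_{k'})$, $k'\sim j_k$, constructed as follows, where for $n_{k'}\ge n_k$ with $w_k=n_{k'}-n_k$, $\bar h_{k,k'}:\mathbb{R}^{n_k}\times\mathbb{R}^{w_k}\to\mathbb{R}^{n_{k'}}$ is a volume-preserving diffeomorphism with $\bar h_{k,k'}\sharp\otimes_{n_{k'}}\nu=\otimes_{n_{k'}}\nu$: if $n_{k'}\ge n_k$, set $\mathbf{z}_k=T_k(\boldsymbol\theta_k)$, draw $\mathbf{u}_k\sim\otimes_{w_k}\nu$, and set $\boldsymbol\theta'_{k'}=T_{k'}^{-1}(\bar h_{k,k'}(\mathbf{z}_k,\mathbf{u}_k))$; if $n_{k'}<n_k$, set $(\mathbf{z}_{k'},\mathbf{u}_{k'})=\bar h_{k',k}^{-1}(T_k(\boldsymbol\theta_k))$, discard $\mathbf{u}_{k'}$,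 and set $\boldsymbol\theta'_{k'}=T_{k'}^{-1}(\mathbf{z}_{k'})$. These are accepted with the standard RJMCMC acceptance probability $$\alpha(\mathbf{x},\mathbf{x}')=1\wedge\frac{\pi(\mathbf{x}')\,j_{k'}(k)\,g_{k',k}(\mathbf{u}_{k'})}{\pi(\mathbf{x})\,j_k(k')\,g_{k,k'}(\mathbf{u}_k)}\,\big|J_{h_{k,k'}}(\boldsymbol\theta_k,\mathbf{u}_k)\big|,$$ where $h_{k,k'}$ is the composite map $(\boldsymbol\theta_k,\mathbf{u}_k)\mapsto(\boldsymbol\theta'_{k'},\mathbf{u}_{k'})$ and $g_{k,k'}$, $g_{k',k}$ are the densities ($\otimes_{w}\nu$, or $1$ if the auxiliary vector is empty) of the auxiliary variables of the forward and reverse moves. If the model-jump distributions $\{j_k\}$ are chosen such that $$\pi(k')\,j_{k'}(k)=\pi(k)\,j_k(k')\quad\text{for all }k,k'\in\mathcal{K},$$ then the proposal is rejection-free, i.e. $\alpha(\mathbf{x},\mathbf{x}')=1$ for every proposed across-model move.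
   Context: For a map $T$ and distribution $\mu$, $T\sharp\mu$ denotes the pushforward. $\otimes_n\nu$ is the $n$-fold product distribution of $\nu$. $|J_f|$ is the absolute Jacobian determinant. $j_k(k')$ is the probability of proposing model $k'$ from model $k$; $\wedge$ denotes minimum. A diffeomorphism is volume-preserving if its absolute Jacobian determinant is identically $1$. *)

theory Defs
  imports "HOL-Analysis.Analysis"
begin

text \<open>The dimension n_k varies with the model index k, so R^n is represented by
  functions nat => real that vanish from index n on.\<close>

definition Rn :: "nat \<Rightarrow> (nat \<Rightarrow> real) set" where
  "Rn n = {x. \<forall>i\<ge>n. x i = 0}"

definition vnorm :: "nat \<Rightarrow> (nat \<Rightarrow> real) \<Rightarrow> real" where
  "vnorm n x = sqrt (\<Sum>i<n. (x i)\<^sup>2)"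

definition Leb :: "nat \<Rightarrow> (nat \<Rightarrow> real) measure" where
  "Leb n = PiM {..<n} (\<lambda>_. lborel)"

definition zpad :: "nat \<Rightarrow> (nat \<Rightarrow> real) \<Rightarrow> (nat \<Rightarrow> real)" where
  "zpad n x = (\<lambda>i. if i < n then x i else 0)"

definition takev :: "nat \<Rightarrow> (nat \<Rightarrow> real) \<Rightarrow> (nat \<Rightarrow> real)" where
  "takev n v = (\<lambda>i. if i < n then v i else 0)"

definition dropv :: "nat \<Rightarrow> (nat \<Rightarrow> real) \<Rightarrow> (nat \<Rightarrow> real)" where
  "dropv n v = (\<lambda>i. v (i + n))"

definition joinv :: "nat \<Rightarrow> (nat \<Rightarrow> real) \<Rightarrow> (nat \<Rightarrow> real) \<Rightarrow> (nat \<Rightarrow> real)" where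
  "joinv n z u = (\<lambda>i. if i < n then z i else u (i - n))"

text \<open>Frechet derivative of f : R^n -> R^m at x with Jacobian matrix A (entries A i j, i<m, j<n).
  The filter uses the product topology on nat => real, which on Rn n is the Euclidean one.\<close>
definition has_jacobian ::
  "nat \<Rightarrow> nat \<Rightarrow> ((nat \<Rightarrow> real) \<Rightarrow> (nat \<Rightarrow> real)) \<Rightarrow> (nat \<Rightarrow> nat \<Rightarrow> real) \<Rightarrow> (nat \<Rightarrow> real) \<Rightarrow> bool"
  where
  "has_jacobian n m f A x \<longleftrightarrow>
     ((\<lambda>y. vnorm m (\<lambda>i. f y i - f x i - (\<Sum>j<n. A i j * (y j - x j))) / vnorm n (\<lambda>i. y i - x i))
        \<longlongrightarrow> 0) (at x within Rn n)"

definition detn :: "nat \<Rightarrow> (nat \<Rightarrow> nat \<Rightarrow> real) \<Rightarrow> real" where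
  "detn n A = (\<Sum>p | p permutes {..<n}. of_int (sign p) * (\<Prod>i<n. A i (p i)))"

definition jacdet :: "nat \<Rightarrow> ((nat \<Rightarrow> real) \<Rightarrow> (nat \<Rightarrow> real)) \<Rightarrow> (nat \<Rightarrow> real) \<Rightarrow> real" where
  "jacdet n f x = detn n (SOME A. has_jacobian n n f A x)"

definition C1_on :: "nat \<Rightarrow> nat \<Rightarrow> ((nat \<Rightarrow> real) \<Rightarrow> (nat \<Rightarrow> real)) \<Rightarrow> bool" where
  "C1_on n m f \<longleftrightarrow> (\<forall>x\<in>Rn n. f x \<in> Rn m) \<and>
     (\<exists>A. (\<forall>x\<in>Rn n. has_jacobian n m f (A x) x) \<and>
          (\<forall>i<m. \<forall>j<n. continuous_on (Rn n) (\<lambda>x. A x i j)))"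

definition diffeo :: "nat \<Rightarrow> ((nat \<Rightarrow> real) \<Rightarrow> (nat \<Rightarrow> real)) \<Rightarrow> bool" where
  "diffeo n f \<longleftrightarrow> bij_betw f (Rn n) (Rn n) \<and> C1_on n n f \<and> C1_on n n (inv_into (Rn n) f)"

definition volume_preserving :: "nat \<Rightarrow> ((nat \<Rightarrow> real) \<Rightarrow> (nat \<Rightarrow> real)) \<Rightarrow> bool" where
  "volume_preserving n f \<longleftrightarrow> (\<forall>x\<in>Rn n. \<bar>jacdet n f x\<bar> = 1)"

definition prod_dens :: "(real \<Rightarrow> real) \<Rightarrow> nat \<Rightarrow> (nat \<Rightarrow> real) \<Rightarrow> real" where
  "prod_dens \<nu> n x = (\<Prod>i<n. \<nu> (x i))"

text \<open>T # p = q for a diffeomorphism T of R^n, stated at the level of densities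
  (change of variables formula): p(x) = q(T x) |J_T(x)|.\<close>
definition pushforward_dens ::
  "nat \<Rightarrow> ((nat \<Rightarrow> real) \<Rightarrow> (nat \<Rightarrow> real)) \<Rightarrow> ((nat \<Rightarrow> real) \<Rightarrow> real) \<Rightarrow> ((nat \<Rightarrow> real) \<Rightarrow> real) \<Rightarrow> bool"
  where
  "pushforward_dens n T p q \<longleftrightarrow> (\<forall>x\<in>Rn n. p x = q (T x) * \<bar>jacdet n T x\<bar>)"

text \<open>Composite map h_{k,k'}: (theta_k, u_k) |-> (theta'_{k'}, u_{k'}), both sides encoded as
  joined vectors in R^(max n_k n_{k'}).\<close>
definition hmap ::
  "('k \<Rightarrow> nat) \<Rightarrow> ('k \<Rightarrow> (nat \<Rightarrow> real) \<Rightarrow> (nat \<Rightarrow> real))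
   \<Rightarrow> ('k \<Rightarrow> 'k \<Rightarrow> (nat \<Rightarrow> real) \<Rightarrow> (nat \<Rightarrow> real)) \<Rightarrow> 'k \<Rightarrow> 'k \<Rightarrow> (nat \<Rightarrow> real) \<Rightarrow> (nat \<Rightarrow> real)"
  where
  "hmap n T hbar k k' v =
     (if n k \<le> n k' then
        inv_into (Rn (n k')) (T k')
          (hbar k k' (joinv (n k) (T k (takev (n k) v)) (dropv (n k) v)))
      else
        (let zu = inv_into (Rn (n k)) (hbar k' k) (T k v)
         in joinv (n k') (inv_into (Rn (n k')) (T k') (takev (n k') zu)) (dropv (n k') zu)))"

text \<open>The forward auxiliary dimension is n k' - n k (truncated to 0), the reverse one
  n k - n k' (truncated to 0); prod_dens over dimension 0 is 1.\<close>
definition accept ::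
  "('k \<Rightarrow> nat) \<Rightarrow> ('k \<Rightarrow> real) \<Rightarrow> ('k \<Rightarrow> (nat \<Rightarrow> real) \<Rightarrow> real) \<Rightarrow> ('k \<Rightarrow> 'k \<Rightarrow> real)
   \<Rightarrow> (real \<Rightarrow> real) \<Rightarrow> ('k \<Rightarrow> (nat \<Rightarrow> real) \<Rightarrow> (nat \<Rightarrow> real))
   \<Rightarrow> ('k \<Rightarrow> 'k \<Rightarrow> (nat \<Rightarrow> real) \<Rightarrow> (nat \<Rightarrow> real))
   \<Rightarrow> 'k \<Rightarrow> (nat \<Rightarrow> real) \<Rightarrow> (nat \<Rightarrow> real) \<Rightarrow> 'k \<Rightarrow> real"
  where
  "accept n piK pic j \<nu> T hbar k \<theta> u k' =
     (let D = max (n k) (n k');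
          v = joinv (n k) \<theta> u;
          w = hmap n T hbar k k' v;
          \<theta>' = takev (n k') w;
          u' = dropv (n k') w
      in min 1 ((piK k' * pic k' \<theta>' * j k' k * prod_dens \<nu> (n k - n k') u')
                / (piK k * pic k \<theta> * j k k' * prod_dens \<nu> (n k' - n k) u)
                * \<bar>jacdet D (hmap n T hbar k k') v\<bar>))"

end

theory Submission
  imports Defs "Jordan_Normal_Form.Determinant"
begin

(* The composite map h of an upward move is (T_k x id), then hbar_{k,k'}, then T_{k'}^-1, and
   these transport pi_k (x) nu^w to nu^(n_k) (x) nu^w = nu^(n_k'), to nu^(n_k'), and to pi_{k'};
   a downward move is the same chain run backwards.  Pushforward identities between densities
   compose by the chain rule and the multiplicativity of determinants, so
   pi_k(theta) g(u) = pi_{k'}(theta') g'(u') |J_h|.  Hence the density and Jacobian part of the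
   acceptance ratio is 1, and the balance condition cancels pi(k') j_{k'}(k) / (pi(k) j_k(k')). *)

lemma vnorm_eq_L2_set: "vnorm n x = L2_set x {..<n}"
  unfolding vnorm_def L2_set_def by simp

lemma vnorm_nonneg: "0 \<le> vnorm n x"
  by (simp add: vnorm_eq_L2_set)

lemma abs_component_le_vnorm: "i < n \<Longrightarrow> \<bar>x i\<bar> \<le> vnorm n x"
  unfolding vnorm_def by (rule real_le_rsqrt) (auto intro!: member_le_sum)

lemma vnorm_triangle: "vnorm n (\<lambda>i. a i + b i) \<le> vnorm n a + vnorm n b"
  unfolding vnorm_eq_L2_set by (rule L2_set_triangle_ineq)

lemma vnorm_le_sum_abs: "vnorm n x \<le> (\<Sum>i<n. \<bar>x i\<bar>)"
  unfolding vnorm_eq_L2_set by (rule L2_set_le_sum_abs)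

lemma vnorm_cong: "(\<And>i. i < n \<Longrightarrow> x i = y i) \<Longrightarrow> vnorm n x = vnorm n y"
  unfolding vnorm_def by simp

lemma vnorm_mono_dim: "a \<le> D \<Longrightarrow> vnorm a x \<le> vnorm D x"
  unfolding vnorm_def by (intro real_sqrt_le_mono sum_mono2) auto

lemma vnorm_zero_pad:
  assumes "a \<le> D"
  shows "vnorm D (\<lambda>i. if i < a then x i else 0) = vnorm a x"
proof -
  have "(\<Sum>i<D. (if i < a then x i else 0)\<^sup>2) = (\<Sum>i<a. (if i < a then x i else 0)\<^sup>2)"
    using assms by (intro sum.mono_neutral_right) auto
  then show ?thesis unfolding vnorm_def by simp
qed

lemma vnorm_eq_0_iff: "vnorm n x = 0 \<longleftrightarrow> (\<forall>i<n. x i = 0)"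
  unfolding vnorm_eq_L2_set by (subst L2_set_eq_0_iff) auto

lemma Rn_eq_if_vnorm_diff_eq_0:
  assumes "x \<in> Rn n" "y \<in> Rn n" "vnorm n (\<lambda>i. y i - x i) = 0"
  shows "y = x"
proof
  fix i show "y i = x i"
    using assms by (cases "i < n") (auto simp: Rn_def vnorm_eq_0_iff)
qed

definition mat_l1_norm :: "nat \<Rightarrow> nat \<Rightarrow> (nat \<Rightarrow> nat \<Rightarrow> real) \<Rightarrow> real" where
  "mat_l1_norm m n A = (\<Sum>i<m. \<Sum>j<n. \<bar>A i j\<bar>)"

lemma mat_l1_norm_nonneg: "0 \<le> mat_l1_norm m n A"
  unfolding mat_l1_norm_def by (intro sum_nonneg) auto

lemma vnorm_mat_vec_le: "vnorm m (\<lambda>i. \<Sum>j<n. A i j * w j) \<le> mat_l1_norm m n A * vnorm n w"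
proof -
  have "vnorm m (\<lambda>i. \<Sum>j<n. A i j * w j) \<le> (\<Sum>i<m. \<bar>\<Sum>j<n. A i j * w j\<bar>)"
    by (rule vnorm_le_sum_abs)
  also have "\<dots> \<le> (\<Sum>i<m. \<Sum>j<n. \<bar>A i j\<bar> * vnorm n w)"
  proof (intro sum_mono)
    fix i
    have "\<bar>\<Sum>j<n. A i j * w j\<bar> \<le> (\<Sum>j<n. \<bar>A i j\<bar> * \<bar>w j\<bar>)"
      unfolding abs_mult[symmetric] by (rule sum_abs)
    also have "\<dots> \<le> (\<Sum>j<n. \<bar>A i j\<bar> * vnorm n w)"
      by (intro sum_mono mult_left_mono abs_component_le_vnorm) auto
    finally show "\<bar>\<Sum>j<n. A i j * w j\<bar> \<le> (\<Sum>j<n. \<bar>A i j\<bar> * vnorm n w)" .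
  qed
  also have "\<dots> = mat_l1_norm m n A * vnorm n w"
    unfolding mat_l1_norm_def by (simp add: sum_distrib_right)
  finally show ?thesis .
qed

subsection \<open>Jacobians in epsilon-delta form\<close>

text \<open>On Rn n the product topology of nat => real is the Euclidean one, so at points of Rn n
  the filter limit in has_jacobian amounts to this epsilon-delta condition.\<close>

definition has_jacobian_metric ::
  "nat \<Rightarrow> nat \<Rightarrow> ((nat \<Rightarrow> real) \<Rightarrow> (nat \<Rightarrow> real)) \<Rightarrow> (nat \<Rightarrow> nat \<Rightarrow> real) \<Rightarrow> (nat \<Rightarrow> real) \<Rightarrow> bool"
  where "has_jacobian_metric n m f A x \<longleftrightarrow> (\<forall>e>0. \<exists>d>0. \<forall>y\<in>Rn n. vnorm n (\<lambda>i. y i - x i) < d \<longrightarrow>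
     vnorm m (\<lambda>i. f y i - f x i - (\<Sum>j<n. A i j * (y j - x j))) \<le> e * vnorm n (\<lambda>i. y i - x i))"

lemma eventually_vnorm_diff_less:
  assumes "d > 0"
  shows "eventually (\<lambda>y. vnorm n (\<lambda>i. y i - x i) < d) (at x within S)"
proof -
  have "continuous_on UNIV (\<lambda>y. vnorm n (\<lambda>i. y i - x i))"
    unfolding vnorm_def by (intro continuous_intros continuous_on_product_coordinates)
  then have "((\<lambda>y. vnorm n (\<lambda>i. y i - x i)) \<longlongrightarrow> vnorm n (\<lambda>i. x i - x i)) (at x)"
    unfolding continuous_on_def by blast
  then have "eventually (\<lambda>y. vnorm n (\<lambda>i. y i - x i) < d) (at x)"
    using assms by (intro order_tendstoD) (simp_all add: vnorm_def)
  then show ?thesis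
    by (auto simp: eventually_at_filter elim: eventually_mono)
qed

lemma Rn_ball_subset_open:
  assumes "open U" "x \<in> U" "x \<in> Rn n"
  obtains d where "d > 0" "\<And>y. y \<in> Rn n \<Longrightarrow> vnorm n (\<lambda>i. y i - x i) < d \<Longrightarrow> y \<in> U"
proof -
  have "openin (product_topology (\<lambda>i. euclidean) UNIV) U"
    using assms(1) by (simp add: open_fun_def)
  from product_topology_open_contains_basis[OF this assms(2)] obtain X where
    X: "x \<in> (\<Pi>\<^sub>E i\<in>UNIV. X i)" "\<And>i. open (X i)" "(\<Pi>\<^sub>E i\<in>UNIV. X i) \<subseteq> U"
    by auto
  have "\<exists>r>0. \<forall>z. \<bar>z - x i\<bar> < r \<longrightarrow> z \<in> X i" for i
  proof -
    have "x i \<in> X i" using X(1) by auto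
    then show ?thesis
      using X(2)[of i] unfolding open_dist dist_real_def by blast
  qed
  then obtain R where R: "\<And>i. R i > 0" "\<And>i z. \<bar>z - x i\<bar> < R i \<Longrightarrow> z \<in> X i"
    by metis
  define d where "d = Min (insert 1 (R ` {..<n}))"
  have "d > 0" unfolding d_def using R(1) by (subst Min_gr_iff) auto
  moreover have "y \<in> U" if y: "y \<in> Rn n" and yd: "vnorm n (\<lambda>i. y i - x i) < d" for y
  proof -
    have "y i \<in> X i" for i
    proof (cases "i < n")
      case True
      have "d \<le> R i" unfolding d_def using True by (intro Min_le) auto
      then show ?thesis
        using R(2) abs_component_le_vnorm[OF True, of "\<lambda>i. y i - x i"] yd by force
    next
      case False
      then have "y i = x i" using assms(3) y by (simp add: Rn_def)
      then show ?thesis using X(1) by auto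
    qed
    then show "y \<in> U" using X(3) by auto
  qed
  ultimately show ?thesis using that by blast
qed

lemma has_jacobian_metric_if_has_jacobian:
  assumes x: "x \<in> Rn n" and hJ: "has_jacobian n m f A x"
  shows "has_jacobian_metric n m f A x"
  unfolding has_jacobian_metric_def
proof (intro allI impI)
  let ?N = "\<lambda>y. vnorm n (\<lambda>i. y i - x i)"
  let ?E = "\<lambda>y. vnorm m (\<lambda>i. f y i - f x i - (\<Sum>j<n. A i j * (y j - x j)))"
  fix e :: real assume "e > 0"
  with hJ have "eventually (\<lambda>y. dist (?E y / ?N y) 0 < e) (at x within Rn n)"
    unfolding has_jacobian_def tendsto_iff by blast
  then obtain U where U: "open U" "x \<in> U"
    "\<And>y. y \<in> U \<Longrightarrow> y \<noteq> x \<Longrightarrow> y \<in> Rn n \<Longrightarrow> dist (?E y / ?N y) 0 < e"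
    unfolding eventually_at_topological by blast
  obtain d where "d > 0" and d: "\<And>y. y \<in> Rn n \<Longrightarrow> ?N y < d \<Longrightarrow> y \<in> U"
    using Rn_ball_subset_open[OF U(1,2) x] by blast
  have "?E y \<le> e * ?N y" if y: "y \<in> Rn n" "?N y < d" for y
  proof (cases "?N y = 0")
    case True
    then have "y = x" using Rn_eq_if_vnorm_diff_eq_0[OF x y(1)] by blast
    then show ?thesis by (simp add: vnorm_def)
  next
    case False
    then have "?N y > 0" "y \<noteq> x" by (auto simp: less_le vnorm_nonneg vnorm_eq_0_iff)
    then have "?E y / ?N y < e"
      using U(3) d y by (force simp: dist_real_def vnorm_nonneg)
    then show ?thesis using \<open>?N y > 0\<close> by (simp add: pos_divide_less_eq)
  qed
  with \<open>d > 0\<close> show "\<exists>d>0. \<forall>y\<in>Rn n. ?N y < d \<longrightarrow> ?E y \<le> e * ?N y" by blast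
qed

lemma has_jacobian_if_metric:
  assumes hJ: "has_jacobian_metric n m f A x"
  shows "has_jacobian n m f A x"
  unfolding has_jacobian_def tendsto_iff
proof (intro allI impI)
  let ?N = "\<lambda>y. vnorm n (\<lambda>i. y i - x i)"
  let ?E = "\<lambda>y. vnorm m (\<lambda>i. f y i - f x i - (\<Sum>j<n. A i j * (y j - x j)))"
  fix e :: real assume "e > 0"
  then obtain d where "d > 0" and d: "\<And>y. y \<in> Rn n \<Longrightarrow> ?N y < d \<Longrightarrow> ?E y \<le> (e/2) * ?N y"
    using hJ[unfolded has_jacobian_metric_def, rule_format, of "e/2"] by auto
  have "eventually (\<lambda>y. y \<in> Rn n \<and> ?N y < d) (at x within Rn n)"
    using eventually_vnorm_diff_less[OF \<open>d > 0\<close>]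
    by (auto simp: eventually_at_filter elim: eventually_mono)
  then show "eventually (\<lambda>y. dist (?E y / ?N y) 0 < e) (at x within Rn n)"
  proof (rule eventually_mono)
    fix y assume y: "y \<in> Rn n \<and> ?N y < d"
    show "dist (?E y / ?N y) 0 < e"
    proof (cases "?N y = 0")
      case True
      then show ?thesis using \<open>e > 0\<close> by simp
    next
      case False
      then have "?N y > 0" by (simp add: less_le vnorm_nonneg)
      then have "?E y / ?N y \<le> e/2" using d y by (simp add: pos_divide_le_eq)
      moreover have "dist (?E y / ?N y) 0 = ?E y / ?N y"
        by (simp add: dist_real_def vnorm_nonneg)
      ultimately show ?thesis using \<open>e > 0\<close> by linarith
    qed
  qed
qed

lemma has_jacobian_iff_metric:
  "x \<in> Rn n \<Longrightarrow> has_jacobian n m f A x \<longleftrightarrow> has_jacobian_metric n m f A x"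
  using has_jacobian_metric_if_has_jacobian has_jacobian_if_metric by blast

lemma has_jacobian_metric_unique:
  assumes hA: "has_jacobian_metric n m f A x" and hB: "has_jacobian_metric n m f B x"
    and x: "x \<in> Rn n" and i: "i < m" and j: "j < n"
  shows "A i j = B i j"
proof (rule ccontr)
  assume "A i j \<noteq> B i j"
  define c where "c = \<bar>A i j - B i j\<bar>"
  have c: "c > 0" using \<open>A i j \<noteq> B i j\<close> unfolding c_def by simp
  obtain d1 where "d1 > 0" and d1: "\<And>y. y \<in> Rn n \<Longrightarrow> vnorm n (\<lambda>i. y i - x i) < d1 \<Longrightarrow>
     vnorm m (\<lambda>i. f y i - f x i - (\<Sum>j<n. A i j * (y j - x j))) \<le> (c/4) * vnorm n (\<lambda>i. y i - x i)"
    using hA[unfolded has_jacobian_metric_def, rule_format, of "c/4"] c by auto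
  obtain d2 where "d2 > 0" and d2: "\<And>y. y \<in> Rn n \<Longrightarrow> vnorm n (\<lambda>i. y i - x i) < d2 \<Longrightarrow>
     vnorm m (\<lambda>i. f y i - f x i - (\<Sum>j<n. B i j * (y j - x j))) \<le> (c/4) * vnorm n (\<lambda>i. y i - x i)"
    using hB[unfolded has_jacobian_metric_def, rule_format, of "c/4"] c by auto
  \<comment> \<open>move by t along the j-th coordinate: both linearizations are within c t / 4 of the increment\<close>
  define t where "t = min d1 d2 / 2"
  have t: "t > 0" "t < d1" "t < d2" using \<open>d1 > 0\<close> \<open>d2 > 0\<close> unfolding t_def by auto
  define y where "y = (\<lambda>l. if l = j then x l + t else x l)"
  have y: "y \<in> Rn n" using x j unfolding y_def Rn_def by auto
  have Ny: "vnorm n (\<lambda>l. y l - x l) = t"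
  proof -
    have "(\<Sum>l<n. (y l - x l)\<^sup>2) = t\<^sup>2"
      using j by (simp add: y_def if_distrib[of "\<lambda>z. (z - _)\<^sup>2"] sum.If_cases)
    then show ?thesis unfolding vnorm_def using t by simp
  qed
  have lin: "(\<Sum>l<n. M i l * (y l - x l)) = M i j * t" for M :: "nat \<Rightarrow> nat \<Rightarrow> real"
    using j by (simp add: y_def if_distrib[of "\<lambda>z. _ * (z - _)"] sum.If_cases)
  have err: "\<bar>f y i - f x i - M i j * t\<bar> \<le> (c/4) * t"
    if "vnorm m (\<lambda>i. f y i - f x i - (\<Sum>j<n. M i j * (y j - x j))) \<le> (c/4) * t" for M
    using abs_component_le_vnorm[OF i, of "\<lambda>i. f y i - f x i - (\<Sum>j<n. M i j * (y j - x j))"]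
      that lin[of M] by simp
  have "c * t = \<bar>(f y i - f x i - B i j * t) - (f y i - f x i - A i j * t)\<bar>"
    unfolding c_def using t by (simp add: abs_mult left_diff_distrib[symmetric])
  also have "\<dots> \<le> (c/4) * t + (c/4) * t"
  proof -
    have "vnorm m (\<lambda>i. f y i - f x i - (\<Sum>j<n. A i j * (y j - x j))) \<le> (c/4) * t"
      using d1[OF y] t Ny by simp
    moreover have "vnorm m (\<lambda>i. f y i - f x i - (\<Sum>j<n. B i j * (y j - x j))) \<le> (c/4) * t"
      using d2[OF y] t Ny by simp
    ultimately show ?thesis using err[of A] err[of B] by linarith
  qed
  finally show False using c t by (simp add: mult_le_cancel_right)
qed

lemma has_jacobian_metric_id: "has_jacobian_metric n n (\<lambda>y. y) (\<lambda>i j. if i = j then 1 else 0) x"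
proof -
  have "(\<Sum>j<n. (if i = j then 1 else 0) * z j) = z i" if "i < n" for i and z :: "nat \<Rightarrow> real"
    using that by (simp add: if_distrib[of "\<lambda>c. c * _"] sum.If_cases)
  then have "vnorm n (\<lambda>i. y i - x i - (\<Sum>j<n. (if i = j then 1 else 0) * (y j - x j))) = 0" for y
    by (simp add: vnorm_eq_0_iff)
  then show ?thesis
    unfolding has_jacobian_metric_def by (auto intro!: exI[of _ 1] simp: vnorm_nonneg)
qed

lemma has_jacobian_metric_cong:
  "(\<And>y. y \<in> Rn n \<Longrightarrow> f y = g y) \<Longrightarrow> x \<in> Rn n \<Longrightarrow>
    has_jacobian_metric n m f A x \<longleftrightarrow> has_jacobian_metric n m g A x"
  unfolding has_jacobian_metric_def by simp

lemma has_jacobian_metric_locally_lipschitz: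
  assumes "has_jacobian_metric n m f A x"
  obtains d where "d > 0" "\<And>y. y \<in> Rn n \<Longrightarrow> vnorm n (\<lambda>i. y i - x i) < d \<Longrightarrow>
    vnorm m (\<lambda>i. f y i - f x i) \<le> (mat_l1_norm m n A + 1) * vnorm n (\<lambda>i. y i - x i)"
proof -
  obtain d where "d > 0" and d: "\<And>y. y \<in> Rn n \<Longrightarrow> vnorm n (\<lambda>i. y i - x i) < d \<Longrightarrow>
     vnorm m (\<lambda>i. f y i - f x i - (\<Sum>j<n. A i j * (y j - x j))) \<le> vnorm n (\<lambda>i. y i - x i)"
    using assms[unfolded has_jacobian_metric_def, rule_format, of 1] by auto
  have "vnorm m (\<lambda>i. f y i - f x i) \<le> (mat_l1_norm m n A + 1) * vnorm n (\<lambda>i. y i - x i)"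
    if "y \<in> Rn n" "vnorm n (\<lambda>i. y i - x i) < d" for y
  proof -
    have "vnorm m (\<lambda>i. f y i - f x i)
        \<le> vnorm m (\<lambda>i. f y i - f x i - (\<Sum>j<n. A i j * (y j - x j))) + vnorm m (\<lambda>i. \<Sum>j<n. A i j * (y j - x j))"
      using vnorm_triangle[of m "\<lambda>i. f y i - f x i - (\<Sum>j<n. A i j * (y j - x j))"
          "\<lambda>i. \<Sum>j<n. A i j * (y j - x j)"] by simp
    moreover have "vnorm m (\<lambda>i. \<Sum>j<n. A i j * (y j - x j)) \<le> mat_l1_norm m n A * vnorm n (\<lambda>i. y i - x i)"
      by (rule vnorm_mat_vec_le)
    ultimately show ?thesis
      using d[OF that] by (simp add: distrib_right)
  qed
  with \<open>d > 0\<close> that show ?thesis by blast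
qed

lemma vnorm_linearization_error_comp_le:
  assumes outer: "vnorm p (\<lambda>i. z' i - z i - (\<Sum>l<m. B i l * w l)) \<le> e2 * vnorm m w"
    and step: "vnorm m w \<le> c * N"
    and inner: "vnorm m (\<lambda>l. w l - (\<Sum>j<n. A l j * d j)) \<le> e1 * N"
    and "e2 \<ge> 0"
  shows "vnorm p (\<lambda>i. z' i - z i - (\<Sum>j<n. (\<Sum>l<m. B i l * A l j) * d j))
    \<le> (e2 * c + mat_l1_norm p m B * e1) * N"
proof -
  have "(\<Sum>j<n. (\<Sum>l<m. B i l * A l j) * d j) = (\<Sum>l<m. B i l * (\<Sum>j<n. A l j * d j))" for i
    by (simp add: sum_distrib_left sum_distrib_right mult.assoc sum.swap[of _ "{..<n}"])
  then have eq: "(\<lambda>i. z' i - z i - (\<Sum>j<n. (\<Sum>l<m. B i l * A l j) * d j))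
      = (\<lambda>i. (z' i - z i - (\<Sum>l<m. B i l * w l)) + (\<Sum>l<m. B i l * (w l - (\<Sum>j<n. A l j * d j))))"
    by (simp add: fun_eq_iff right_diff_distrib sum_subtractf)
  have "e2 * vnorm m w \<le> e2 * (c * N)"
    using step \<open>e2 \<ge> 0\<close> by (rule mult_left_mono)
  moreover have "mat_l1_norm p m B * vnorm m (\<lambda>l. w l - (\<Sum>j<n. A l j * d j))
      \<le> mat_l1_norm p m B * (e1 * N)"
    using inner mat_l1_norm_nonneg by (rule mult_left_mono)
  ultimately show ?thesis
    unfolding eq using outer vnorm_triangle[of p "\<lambda>i. z' i - z i - (\<Sum>l<m. B i l * w l)"
        "\<lambda>i. \<Sum>l<m. B i l * (w l - (\<Sum>j<n. A l j * d j))"]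
      vnorm_mat_vec_le[where m = p and n = m and A = B and w = "\<lambda>l. w l - (\<Sum>j<n. A l j * d j)"]
    by (simp add: algebra_simps)
qed

lemma has_jacobian_metric_comp:
  assumes hf: "has_jacobian_metric n m f A x" and hg: "has_jacobian_metric m p g B (f x)"
    and f_into: "\<forall>y\<in>Rn n. f y \<in> Rn m"
  shows "has_jacobian_metric n p (g \<circ> f) (\<lambda>i j. \<Sum>l<m. B i l * A l j) x"
  unfolding has_jacobian_metric_def
proof (intro allI impI)
  fix e :: real assume "e > 0"
  define a where "a = mat_l1_norm m n A"
  define b where "b = mat_l1_norm p m B"
  have "a \<ge> 0" "b \<ge> 0" unfolding a_def b_def by (simp_all add: mat_l1_norm_nonneg)
  define e1 where "e1 = e / (2 * (b + 1))"
  define e2 where "e2 = e / (2 * (a + 1))"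
  have "e1 > 0" "e2 > 0"
    using \<open>e > 0\<close> \<open>a \<ge> 0\<close> \<open>b \<ge> 0\<close> by (simp_all add: e1_def e2_def add_nonneg_pos)
  have "b * e1 \<le> e / 2" "e2 * (a + 1) = e / 2"
    using \<open>e > 0\<close> \<open>a \<ge> 0\<close> \<open>b \<ge> 0\<close> by (simp_all add: e1_def e2_def field_simps)
  then have e12: "b * e1 + e2 * (a + 1) \<le> e" by linarith
  obtain d0 where "d0 > 0" and d0: "\<And>y. y \<in> Rn n \<Longrightarrow> vnorm n (\<lambda>i. y i - x i) < d0 \<Longrightarrow>
     vnorm m (\<lambda>i. f y i - f x i) \<le> (a + 1) * vnorm n (\<lambda>i. y i - x i)"
    using has_jacobian_metric_locally_lipschitz[OF hf] unfolding a_def by blast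
  obtain d1 where "d1 > 0" and d1: "\<And>y. y \<in> Rn n \<Longrightarrow> vnorm n (\<lambda>i. y i - x i) < d1 \<Longrightarrow>
     vnorm m (\<lambda>i. f y i - f x i - (\<Sum>j<n. A i j * (y j - x j))) \<le> e1 * vnorm n (\<lambda>i. y i - x i)"
    using hf \<open>e1 > 0\<close> unfolding has_jacobian_metric_def by blast
  obtain d2 where "d2 > 0" and d2: "\<And>z. z \<in> Rn m \<Longrightarrow> vnorm m (\<lambda>i. z i - f x i) < d2 \<Longrightarrow>
     vnorm p (\<lambda>i. g z i - g (f x) i - (\<Sum>j<m. B i j * (z j - f x j))) \<le> e2 * vnorm m (\<lambda>i. z i - f x i)"
    using hg \<open>e2 > 0\<close> unfolding has_jacobian_metric_def by blast
  define d where "d = min d0 (min d1 (d2 / (a + 1)))"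
  have "d > 0" unfolding d_def using \<open>d0 > 0\<close> \<open>d1 > 0\<close> \<open>d2 > 0\<close> \<open>a \<ge> 0\<close> by auto
  moreover have "vnorm p (\<lambda>i. (g \<circ> f) y i - (g \<circ> f) x i - (\<Sum>j<n. (\<Sum>l<m. B i l * A l j) * (y j - x j)))
      \<le> e * vnorm n (\<lambda>i. y i - x i)" if y: "y \<in> Rn n" and yd: "vnorm n (\<lambda>i. y i - x i) < d" for y
  proof -
    define N where "N = vnorm n (\<lambda>i. y i - x i)"
    have w: "vnorm m (\<lambda>i. f y i - f x i) \<le> (a + 1) * N"
      using d0[OF y] yd unfolding N_def d_def by simp
    also have "\<dots> < d2"
      using yd \<open>a \<ge> 0\<close> unfolding N_def d_def by (simp add: field_simps)
    finally have "vnorm p (\<lambda>i. g (f y) i - g (f x) i - (\<Sum>l<m. B i l * (f y l - f x l)))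
        \<le> e2 * vnorm m (\<lambda>i. f y i - f x i)"
      using d2 f_into y by blast
    moreover have "vnorm m (\<lambda>l. f y l - f x l - (\<Sum>j<n. A l j * (y j - x j))) \<le> e1 * N"
      using d1[OF y] yd unfolding N_def d_def by simp
    ultimately have "vnorm p (\<lambda>i. (g \<circ> f) y i - (g \<circ> f) x i - (\<Sum>j<n. (\<Sum>l<m. B i l * A l j) * (y j - x j)))
        \<le> (e2 * (a + 1) + b * e1) * N"
      unfolding comp_apply b_def using w \<open>e2 > 0\<close> by (intro vnorm_linearization_error_comp_le) auto
    also have "\<dots> \<le> e * N"
      using e12 vnorm_nonneg unfolding N_def by (intro mult_right_mono) auto
    finally show ?thesis unfolding N_def .
  qed
  ultimately show "\<exists>d>0. \<forall>y\<in>Rn n. vnorm n (\<lambda>i. y i - x i) < d \<longrightarrow>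
      vnorm p (\<lambda>i. (g \<circ> f) y i - (g \<circ> f) x i - (\<Sum>j<n. (\<Sum>l<m. B i l * A l j) * (y j - x j)))
      \<le> e * vnorm n (\<lambda>i. y i - x i)" by blast
qed

definition map_head :: "nat \<Rightarrow> ((nat \<Rightarrow> real) \<Rightarrow> (nat \<Rightarrow> real)) \<Rightarrow> (nat \<Rightarrow> real) \<Rightarrow> (nat \<Rightarrow> real)" where
  "map_head a S v = joinv a (S (takev a v)) (dropv a v)"

definition block_diag_id :: "nat \<Rightarrow> (nat \<Rightarrow> nat \<Rightarrow> real) \<Rightarrow> nat \<Rightarrow> nat \<Rightarrow> real" where
  "block_diag_id a A i j = (if i < a then if j < a then A i j else 0 else if i = j then 1 else 0)"

lemma takev_in_Rn: "takev a v \<in> Rn a"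
  unfolding takev_def Rn_def by auto

lemma takev_id: "x \<in> Rn a \<Longrightarrow> takev a x = x"
  unfolding takev_def Rn_def by auto

lemma takev_joinv: "z \<in> Rn a \<Longrightarrow> takev a (joinv a z u) = z"
  unfolding takev_def joinv_def Rn_def by auto

lemma dropv_joinv: "dropv a (joinv a z u) = u"
  unfolding dropv_def joinv_def by simp

lemma joinv_in_Rn: "a \<le> D \<Longrightarrow> z \<in> Rn a \<Longrightarrow> u \<in> Rn (D - a) \<Longrightarrow> joinv a z u \<in> Rn D"
  unfolding joinv_def Rn_def by auto

lemma dropv_in_Rn: "v \<in> Rn D \<Longrightarrow> dropv a v \<in> Rn (D - a)"
  unfolding dropv_def Rn_def by auto

lemma sum_block_diag_id:
  assumes "i < D" "a \<le> D"
  shows "(\<Sum>j<D. block_diag_id a A i j * z j) = (if i < a then \<Sum>j<a. A i j * z j else z i)"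
proof (cases "i < a")
  case True
  have "(\<Sum>j<D. block_diag_id a A i j * z j) = (\<Sum>j<a. block_diag_id a A i j * z j)"
    using assms True by (intro sum.mono_neutral_right) (auto simp: block_diag_id_def)
  then show ?thesis using True by (simp add: block_diag_id_def)
next
  case False
  then have "(\<Sum>j<D. block_diag_id a A i j * z j) = (\<Sum>j<D. if j = i then z j else 0)"
    by (intro sum.cong) (auto simp: block_diag_id_def)
  then show ?thesis using False assms(1) by simp
qed

lemma has_jacobian_metric_map_head:
  assumes hS: "has_jacobian_metric a a S A (takev a v)" and "a \<le> D"
  shows "has_jacobian_metric D D (map_head a S) (block_diag_id a A) v"
  unfolding has_jacobian_metric_def
proof (intro allI impI)
  fix e :: real assume "e > 0"
  then obtain d where "d > 0" and d: "\<And>z. z \<in> Rn a \<Longrightarrow> vnorm a (\<lambda>i. z i - takev a v i) < d \<Longrightarrow>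
     vnorm a (\<lambda>i. S z i - S (takev a v) i - (\<Sum>j<a. A i j * (z j - takev a v j)))
       \<le> e * vnorm a (\<lambda>i. z i - takev a v i)"
    using hS[unfolded has_jacobian_metric_def, rule_format, of e] by auto
  have "vnorm D (\<lambda>i. map_head a S y i - map_head a S v i - (\<Sum>j<D. block_diag_id a A i j * (y j - v j)))
      \<le> e * vnorm D (\<lambda>i. y i - v i)" if yd: "vnorm D (\<lambda>i. y i - v i) < d" for y
  proof -
    define ES where "ES = (\<lambda>i. S (takev a y) i - S (takev a v) i - (\<Sum>j<a. A i j * (takev a y j - takev a v j)))"
    have "vnorm a (\<lambda>i. takev a y i - takev a v i) = vnorm a (\<lambda>i. y i - v i)"
      by (rule vnorm_cong) (simp add: takev_def)
    also have "\<dots> \<le> vnorm D (\<lambda>i. y i - v i)" by (rule vnorm_mono_dim[OF \<open>a \<le> D\<close>])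
    finally have le: "vnorm a (\<lambda>i. takev a y i - takev a v i) \<le> vnorm D (\<lambda>i. y i - v i)" .
    \<comment> \<open>the error lives in the leading a coordinates only, where it is the error of S\<close>
    have "vnorm D (\<lambda>i. map_head a S y i - map_head a S v i - (\<Sum>j<D. block_diag_id a A i j * (y j - v j)))
        = vnorm D (\<lambda>i. if i < a then ES i else 0)"
      using \<open>a \<le> D\<close>
      by (intro vnorm_cong) (auto simp: sum_block_diag_id map_head_def joinv_def dropv_def ES_def takev_def)
    also have "\<dots> = vnorm a ES" by (rule vnorm_zero_pad[OF \<open>a \<le> D\<close>])
    also have "\<dots> \<le> e * vnorm a (\<lambda>i. takev a y i - takev a v i)"
      unfolding ES_def using le yd by (intro d takev_in_Rn) simp
    also have "\<dots> \<le> e * vnorm D (\<lambda>i. y i - v i)"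
      using le \<open>e > 0\<close> by simp
    finally show ?thesis .
  qed
  with \<open>d > 0\<close> show "\<exists>d>0. \<forall>y\<in>Rn D. vnorm D (\<lambda>i. y i - v i) < d \<longrightarrow>
      vnorm D (\<lambda>i. map_head a S y i - map_head a S v i - (\<Sum>j<D. block_diag_id a A i j * (y j - v j)))
      \<le> e * vnorm D (\<lambda>i. y i - v i)" by blast
qed

definition mat_of_fun :: "nat \<Rightarrow> (nat \<Rightarrow> nat \<Rightarrow> real) \<Rightarrow> real Matrix.mat" where
  "mat_of_fun n A = Matrix.mat n n (\<lambda>(i, j). A i j)"

lemma detn_eq_det: "detn n A = Determinant.det (mat_of_fun n A)"
proof -
  have "(\<Prod>i<n. A i (p i)) = (\<Prod>i = 0..<n. mat_of_fun n A $$ (i, p i))" if "p permutes {..<n}" for p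
    using permutes_in_image[OF that]
    by (auto simp: mat_of_fun_def atLeast0LessThan intro!: prod.cong)
  then show ?thesis
    unfolding detn_def det_def by (simp add: mat_of_fun_def atLeast0LessThan)
qed

lemma detn_cong: "(\<And>i j. i < n \<Longrightarrow> j < n \<Longrightarrow> A i j = B i j) \<Longrightarrow> detn n A = detn n B"
  unfolding detn_eq_det mat_of_fun_def by (metis (no_types, lifting) case_prod_conv cong_mat)

lemma detn_mult: "detn n (\<lambda>i j. \<Sum>l<n. B i l * A l j) = detn n B * detn n A"
proof -
  have "mat_of_fun n (\<lambda>i j. \<Sum>l<n. B i l * A l j) = mat_of_fun n B * mat_of_fun n A"
    by (rule eq_matI)
      (auto simp: mat_of_fun_def scalar_prod_def atLeast0LessThan intro!: sum.cong)
  then show ?thesis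
    by (simp add: detn_eq_det det_mult[of _ n] mat_of_fun_def)
qed

lemma detn_id: "detn n (\<lambda>i j. if i = j then 1 else 0) = 1"
proof -
  have "mat_of_fun n (\<lambda>i j. if i = j then 1 else 0) = 1\<^sub>m n"
    unfolding mat_of_fun_def by (rule eq_matI) auto
  then show ?thesis by (simp add: detn_eq_det)
qed

lemma detn_block_diag_id:
  assumes "a \<le> D"
  shows "detn D (block_diag_id a A) = detn a A"
proof -
  have "mat_of_fun D (block_diag_id a A)
      = four_block_mat (mat_of_fun a A) (0\<^sub>m a (D - a)) (0\<^sub>m (D - a) a) (1\<^sub>m (D - a))"
    using assms by (intro eq_matI) (auto simp: mat_of_fun_def block_diag_id_def)
  moreover have "Determinant.det (four_block_mat (mat_of_fun a A) (0\<^sub>m a (D - a)) (0\<^sub>m (D - a) a) (1\<^sub>m (D - a)))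
      = Determinant.det (mat_of_fun a A)"
    by (subst det_four_block_mat_lower_left_zero[of _ a]) (auto simp: mat_of_fun_def)
  ultimately show ?thesis by (simp add: detn_eq_det)
qed

lemma jacdet_eq_detn:
  assumes x: "x \<in> Rn n" and hA: "has_jacobian n n f A x"
  shows "jacdet n f x = detn n A"
proof -
  have "has_jacobian n n f (SOME A. has_jacobian n n f A x) x"
    using hA by (rule someI[where P = "\<lambda>A. has_jacobian n n f A x"])
  then have "has_jacobian_metric n n f (SOME A. has_jacobian n n f A x) x"
    using has_jacobian_iff_metric[OF x] by blast
  moreover have "has_jacobian_metric n n f A x"
    using hA has_jacobian_iff_metric[OF x] by blast
  ultimately show ?thesis
    unfolding jacdet_def using x by (intro detn_cong has_jacobian_metric_unique)
qed

lemma jacdet_cong: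
  assumes "x \<in> Rn n" "\<And>y. y \<in> Rn n \<Longrightarrow> f y = g y"
  shows "jacdet n f x = jacdet n g x"
proof -
  have "has_jacobian n n f A x \<longleftrightarrow> has_jacobian n n g A x" for A
    using has_jacobian_metric_cong[of n f g x n A] assms has_jacobian_iff_metric[OF assms(1)]
    by blast
  then show ?thesis unfolding jacdet_def by presburger
qed

lemma jacdet_id:
  assumes "x \<in> Rn n"
  shows "jacdet n (\<lambda>y. y) x = 1"
proof -
  have "has_jacobian n n (\<lambda>y. y) (\<lambda>i j. if i = j then 1 else 0) x"
    using assms has_jacobian_metric_id by (simp add: has_jacobian_iff_metric)
  then show ?thesis using assms by (simp add: jacdet_eq_detn detn_id)
qed

lemma has_jacobian_comp:
  assumes x: "x \<in> Rn n" and f_into: "\<forall>y\<in>Rn n. f y \<in> Rn m"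
    and "has_jacobian n m f A x" "has_jacobian m p g B (f x)"
  shows "has_jacobian n p (g \<circ> f) (\<lambda>i j. \<Sum>l<m. B i l * A l j) x"
proof -
  have "has_jacobian_metric n m f A x" "has_jacobian_metric m p g B (f x)"
    using assms has_jacobian_iff_metric by blast+
  then show ?thesis
    using has_jacobian_metric_comp f_into has_jacobian_iff_metric[OF x] by blast
qed

lemma has_jacobian_map_head:
  assumes "v \<in> Rn D" "a \<le> D" "has_jacobian a a S A (takev a v)"
  shows "has_jacobian D D (map_head a S) (block_diag_id a A) v"
proof -
  have "has_jacobian_metric a a S A (takev a v)"
    using assms(3) has_jacobian_iff_metric[OF takev_in_Rn] by blast
  then show ?thesis
    using has_jacobian_metric_map_head assms(2) has_jacobian_iff_metric[OF assms(1)] by blast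
qed

definition differentiable_Rn :: "nat \<Rightarrow> ((nat \<Rightarrow> real) \<Rightarrow> (nat \<Rightarrow> real)) \<Rightarrow> bool" where
  "differentiable_Rn n f \<longleftrightarrow> (\<forall>x\<in>Rn n. f x \<in> Rn n \<and> (\<exists>A. has_jacobian n n f A x))"

lemma differentiable_Rn_comp:
  assumes f: "differentiable_Rn n f" and g: "differentiable_Rn n g"
  shows "differentiable_Rn n (g \<circ> f)"
  unfolding differentiable_Rn_def
proof
  fix x assume x: "x \<in> Rn n"
  then obtain A B where fx: "f x \<in> Rn n" and A: "has_jacobian n n f A x"
    and B: "has_jacobian n n g B (f x)"
    using f g unfolding differentiable_Rn_def by blast
  have "has_jacobian n n (g \<circ> f) (\<lambda>i j. \<Sum>l<n. B i l * A l j) x"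
    using f unfolding differentiable_Rn_def by (intro has_jacobian_comp[OF x _ A B]) blast
  moreover have "(g \<circ> f) x \<in> Rn n"
    using g fx unfolding differentiable_Rn_def by simp
  ultimately show "(g \<circ> f) x \<in> Rn n \<and> (\<exists>C. has_jacobian n n (g \<circ> f) C x)" by blast
qed

lemma jacdet_comp:
  assumes f: "differentiable_Rn n f" and g: "differentiable_Rn n g" and x: "x \<in> Rn n"
  shows "jacdet n (g \<circ> f) x = jacdet n g (f x) * jacdet n f x"
proof -
  obtain A B where fx: "f x \<in> Rn n" and A: "has_jacobian n n f A x"
    and B: "has_jacobian n n g B (f x)"
    using f g x unfolding differentiable_Rn_def by blast
  have "has_jacobian n n (g \<circ> f) (\<lambda>i j. \<Sum>l<n. B i l * A l j) x"
    using f unfolding differentiable_Rn_def by (intro has_jacobian_comp[OF x _ A B]) blast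
  then have "jacdet n (g \<circ> f) x = detn n B * detn n A"
    unfolding detn_mult[symmetric] by (rule jacdet_eq_detn[OF x])
  then show ?thesis
    using jacdet_eq_detn[OF x A] jacdet_eq_detn[OF fx B] by simp
qed

lemma differentiable_Rn_map_head:
  assumes S: "differentiable_Rn a S" and "a \<le> D"
  shows "differentiable_Rn D (map_head a S)"
  unfolding differentiable_Rn_def
proof
  fix v assume v: "v \<in> Rn D"
  obtain A where Sv: "S (takev a v) \<in> Rn a" and A: "has_jacobian a a S A (takev a v)"
    using S takev_in_Rn unfolding differentiable_Rn_def by blast
  have "map_head a S v \<in> Rn D"
    unfolding map_head_def by (rule joinv_in_Rn[OF \<open>a \<le> D\<close> Sv dropv_in_Rn[OF v]])
  moreover have "has_jacobian D D (map_head a S) (block_diag_id a A) v"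
    by (rule has_jacobian_map_head[OF v \<open>a \<le> D\<close> A])
  ultimately show "map_head a S v \<in> Rn D \<and> (\<exists>A. has_jacobian D D (map_head a S) A v)" by blast
qed

lemma jacdet_map_head:
  assumes S: "differentiable_Rn a S" and "a \<le> D" and v: "v \<in> Rn D"
  shows "jacdet D (map_head a S) v = jacdet a S (takev a v)"
proof -
  obtain A where A: "has_jacobian a a S A (takev a v)"
    using S takev_in_Rn unfolding differentiable_Rn_def by blast
  have "jacdet D (map_head a S) v = detn D (block_diag_id a A)"
    by (rule jacdet_eq_detn[OF v has_jacobian_map_head[OF v \<open>a \<le> D\<close> A]])
  also have "\<dots> = jacdet a S (takev a v)"
    by (simp add: detn_block_diag_id[OF \<open>a \<le> D\<close>] jacdet_eq_detn[OF takev_in_Rn A])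
  finally show ?thesis .
qed

lemma C1_on_imp_differentiable_Rn: "C1_on n n f \<Longrightarrow> differentiable_Rn n f"
  unfolding C1_on_def differentiable_Rn_def by blast

lemma diffeo_imp_differentiable_Rn:
  assumes "diffeo n T"
  shows "differentiable_Rn n T" "differentiable_Rn n (inv_into (Rn n) T)"
  using assms C1_on_imp_differentiable_Rn unfolding diffeo_def by blast+

lemma jacdet_inv_into:
  assumes T: "diffeo n T" and y: "y \<in> Rn n"
  shows "jacdet n T (inv_into (Rn n) T y) * jacdet n (inv_into (Rn n) T) y = 1"
proof -
  have "bij_betw T (Rn n) (Rn n)" using T unfolding diffeo_def by blast
  then have "jacdet n (T \<circ> inv_into (Rn n) T) y = jacdet n (\<lambda>z. z) y"
    by (intro jacdet_cong[OF y]) (simp add: bij_betw_inv_into_right)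
  then show ?thesis
    using jacdet_comp[OF diffeo_imp_differentiable_Rn(2,1)[OF T] y] jacdet_id[OF y] by simp
qed

subsection \<open>Transport of densities\<close>

definition dens_tensor ::
  "nat \<Rightarrow> ((nat \<Rightarrow> real) \<Rightarrow> real) \<Rightarrow> ((nat \<Rightarrow> real) \<Rightarrow> real) \<Rightarrow> (nat \<Rightarrow> real) \<Rightarrow> real" where
  "dens_tensor a p q v = p (takev a v) * q (dropv a v)"

lemma prod_dens_eq_dens_tensor:
  assumes "a \<le> D"
  shows "prod_dens \<nu> D = dens_tensor a (prod_dens \<nu> a) (prod_dens \<nu> (D - a))"
proof
  fix x
  have "(\<Prod>i<D. \<nu> (x i)) = (\<Prod>i = 0..<a. \<nu> (x i)) * (\<Prod>i = a..<D. \<nu> (x i))"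
    using assms by (simp add: atLeast0LessThan[symmetric] prod.atLeastLessThan_concat)
  moreover have "(\<Prod>i = a..<D. \<nu> (x i)) = (\<Prod>i = 0..<D - a. \<nu> (x (i + a)))"
    using assms prod.shift_bounds_nat_ivl[of "\<lambda>i. \<nu> (x i)" 0 a "D - a"] by simp
  ultimately show "prod_dens \<nu> D x = dens_tensor a (prod_dens \<nu> a) (prod_dens \<nu> (D - a)) x"
    unfolding dens_tensor_def prod_dens_def takev_def dropv_def by (simp add: atLeast0LessThan)
qed

lemma pushforward_dens_comp:
  assumes f: "differentiable_Rn n f" and g: "differentiable_Rn n g"
    and pf: "pushforward_dens n f p q" and pg: "pushforward_dens n g q r"
  shows "pushforward_dens n (g \<circ> f) p r"
  unfolding pushforward_dens_def
proof
  fix x assume x: "x \<in> Rn n"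
  then have "f x \<in> Rn n" using f unfolding differentiable_Rn_def by blast
  then have "p x = r (g (f x)) * \<bar>jacdet n g (f x)\<bar> * \<bar>jacdet n f x\<bar>"
    using pf pg x unfolding pushforward_dens_def by simp
  then show "p x = r ((g \<circ> f) x) * \<bar>jacdet n (g \<circ> f) x\<bar>"
    by (simp add: jacdet_comp[OF f g x] abs_mult)
qed

lemma pushforward_dens_inv_into:
  assumes T: "diffeo n T" and push: "pushforward_dens n T p q"
  shows "pushforward_dens n (inv_into (Rn n) T) q p"
  unfolding pushforward_dens_def
proof
  fix y assume y: "y \<in> Rn n"
  let ?S = "inv_into (Rn n) T"
  have "bij_betw T (Rn n) (Rn n)" using T unfolding diffeo_def by blast
  then have "?S y \<in> Rn n" "T (?S y) = y"
    using y by (simp_all add: bij_betw_inv_into_right inv_into_into bij_betw_imp_surj_on)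
  then have "p (?S y) = q y * \<bar>jacdet n T (?S y)\<bar>"
    using push unfolding pushforward_dens_def by metis
  then have "p (?S y) * \<bar>jacdet n ?S y\<bar> = q y * \<bar>jacdet n T (?S y) * jacdet n ?S y\<bar>"
    by (simp add: abs_mult)
  then show "q y = p (?S y) * \<bar>jacdet n ?S y\<bar>"
    using jacdet_inv_into[OF T y] by simp
qed

lemma pushforward_dens_map_head:
  assumes S: "differentiable_Rn a S" and "a \<le> D" and push: "pushforward_dens a S p q"
  shows "pushforward_dens D (map_head a S) (dens_tensor a p g) (dens_tensor a q g)"
  unfolding pushforward_dens_def
proof
  fix v assume v: "v \<in> Rn D"
  have "S (takev a v) \<in> Rn a"
    using S takev_in_Rn unfolding differentiable_Rn_def by blast
  then have "takev a (map_head a S v) = S (takev a v)" "dropv a (map_head a S v) = dropv a v"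
    unfolding map_head_def by (simp_all add: takev_joinv dropv_joinv)
  moreover have "p (takev a v) = q (S (takev a v)) * \<bar>jacdet a S (takev a v)\<bar>"
    using push takev_in_Rn unfolding pushforward_dens_def by blast
  ultimately show "dens_tensor a p g v = dens_tensor a q g (map_head a S v) * \<bar>jacdet D (map_head a S) v\<bar>"
    unfolding dens_tensor_def jacdet_map_head[OF S \<open>a \<le> D\<close> v] by simp
qed

subsection \<open>The across-model move\<close>

lemma pushforward_dens_upward_move:
  assumes "a \<le> D" and T1: "diffeo a T1" and T2: "diffeo D T2" and H: "diffeo D H"
    and push1: "pushforward_dens a T1 p1 (prod_dens \<nu> a)"
    and push2: "pushforward_dens D T2 p2 (prod_dens \<nu> D)"
    and pushH: "pushforward_dens D H (prod_dens \<nu> D) (prod_dens \<nu> D)"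
  shows "differentiable_Rn D (inv_into (Rn D) T2 \<circ> H \<circ> map_head a T1)"
    and "pushforward_dens D (inv_into (Rn D) T2 \<circ> H \<circ> map_head a T1)
           (dens_tensor a p1 (prod_dens \<nu> (D - a))) p2"
proof -
  have T1': "differentiable_Rn D (map_head a T1)"
    using differentiable_Rn_map_head diffeo_imp_differentiable_Rn(1)[OF T1] \<open>a \<le> D\<close> .
  have HT1': "differentiable_Rn D (H \<circ> map_head a T1)"
    using differentiable_Rn_comp[OF T1' diffeo_imp_differentiable_Rn(1)[OF H]] .
  show "differentiable_Rn D (inv_into (Rn D) T2 \<circ> H \<circ> map_head a T1)"
    unfolding o_assoc[symmetric]
    using differentiable_Rn_comp[OF HT1' diffeo_imp_differentiable_Rn(2)[OF T2]] .
  \<comment> \<open>T1 x id turns p1 (x) nu^(D-a) into nu^a (x) nu^(D-a) = nu^D\<close>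
  have "pushforward_dens D (map_head a T1) (dens_tensor a p1 (prod_dens \<nu> (D - a))) (prod_dens \<nu> D)"
    using pushforward_dens_map_head[OF diffeo_imp_differentiable_Rn(1)[OF T1] \<open>a \<le> D\<close> push1]
    by (simp add: prod_dens_eq_dens_tensor[OF \<open>a \<le> D\<close>])
  then have "pushforward_dens D (H \<circ> map_head a T1) (dens_tensor a p1 (prod_dens \<nu> (D - a))) (prod_dens \<nu> D)"
    using pushforward_dens_comp[OF T1' diffeo_imp_differentiable_Rn(1)[OF H] _ pushH] by blast
  then show "pushforward_dens D (inv_into (Rn D) T2 \<circ> H \<circ> map_head a T1)
      (dens_tensor a p1 (prod_dens \<nu> (D - a))) p2"
    unfolding o_assoc[symmetric]
    using pushforward_dens_comp[OF HT1' diffeo_imp_differentiable_Rn(2)[OF T2] _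
        pushforward_dens_inv_into[OF T2 push2]] by blast
qed

lemma pushforward_dens_downward_move:
  assumes "a \<le> D" and T1: "diffeo D T1" and T2: "diffeo a T2" and H: "diffeo D H"
    and push1: "pushforward_dens D T1 p1 (prod_dens \<nu> D)"
    and push2: "pushforward_dens a T2 p2 (prod_dens \<nu> a)"
    and pushH: "pushforward_dens D H (prod_dens \<nu> D) (prod_dens \<nu> D)"
  shows "pushforward_dens D (map_head a (inv_into (Rn a) T2) \<circ> inv_into (Rn D) H \<circ> T1)
           p1 (dens_tensor a p2 (prod_dens \<nu> (D - a)))"
proof -
  have HT1': "differentiable_Rn D (inv_into (Rn D) H \<circ> T1)"
    using differentiable_Rn_comp diffeo_imp_differentiable_Rn T1 H by blast
  have T2': "differentiable_Rn D (map_head a (inv_into (Rn a) T2))"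
    using differentiable_Rn_map_head diffeo_imp_differentiable_Rn(2)[OF T2] \<open>a \<le> D\<close> .
  have "pushforward_dens D (inv_into (Rn D) H \<circ> T1) p1 (prod_dens \<nu> D)"
    using pushforward_dens_comp[OF diffeo_imp_differentiable_Rn(1)[OF T1]
        diffeo_imp_differentiable_Rn(2)[OF H] push1 pushforward_dens_inv_into[OF H pushH]] .
  moreover have "pushforward_dens D (map_head a (inv_into (Rn a) T2))
      (prod_dens \<nu> D) (dens_tensor a p2 (prod_dens \<nu> (D - a)))"
    using pushforward_dens_map_head[OF diffeo_imp_differentiable_Rn(2)[OF T2] \<open>a \<le> D\<close>
        pushforward_dens_inv_into[OF T2 push2]]
    by (simp add: prod_dens_eq_dens_tensor[OF \<open>a \<le> D\<close>])
  ultimately show ?thesis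
    unfolding o_assoc[symmetric] using pushforward_dens_comp[OF HT1' T2'] by blast
qed

lemma hmap_upward:
  "n k \<le> n k' \<Longrightarrow>
    hmap n T hbar k k' = inv_into (Rn (n k')) (T k') \<circ> hbar k k' \<circ> map_head (n k) (T k)"
  by (simp add: hmap_def map_head_def fun_eq_iff)

lemma hmap_downward:
  "\<not> n k \<le> n k' \<Longrightarrow>
    hmap n T hbar k k' = map_head (n k') (inv_into (Rn (n k')) (T k')) \<circ> inv_into (Rn (n k)) (hbar k' k) \<circ> T k"
  by (simp add: hmap_def map_head_def fun_eq_iff Let_def)

lemma accept_eq_one_if_balanced:
  assumes bal: "piK k' * j k' k = piK k * j k k'"
    and nz: "piK k * pic k \<theta> * j k k' * prod_dens \<nu> (n k' - n k) u \<noteq> 0"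
    and w: "w = hmap n T hbar k k' (joinv (n k) \<theta> u)"
    and dens: "pic k' (takev (n k') w) * prod_dens \<nu> (n k - n k') (dropv (n k') w)
        * \<bar>jacdet (max (n k) (n k')) (hmap n T hbar k k') (joinv (n k) \<theta> u)\<bar>
      = pic k \<theta> * prod_dens \<nu> (n k' - n k) u"
  shows "accept n piK pic j \<nu> T hbar k \<theta> u k' = 1"
proof -
  let ?num = "piK k' * pic k' (takev (n k') w) * j k' k * prod_dens \<nu> (n k - n k') (dropv (n k') w)"
  let ?den = "piK k * pic k \<theta> * j k k' * prod_dens \<nu> (n k' - n k) u"
  let ?J = "\<bar>jacdet (max (n k) (n k')) (hmap n T hbar k k') (joinv (n k) \<theta> u)\<bar>"
  have "?num * ?J = (piK k' * j k' k)
      * (pic k' (takev (n k') w) * prod_dens \<nu> (n k - n k') (dropv (n k') w) * ?J)"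
    by (simp only: mult_ac)
  also have "\<dots> = ?den"
    unfolding bal dens by (simp only: mult_ac)
  finally have "?num * ?J = ?den" .
  then have ratio: "?num / ?den * ?J = 1"
    using nz by (simp add: times_divide_eq_left)
  show ?thesis
    unfolding accept_def Let_def w[symmetric] ratio by simp
qed

lemma accept_eq_one_upward:
  assumes up: "n k \<le> n k'"
    and bal: "piK k' * j k' k = piK k * j k k'"
    and nz: "piK k * pic k \<theta> * j k k' * prod_dens \<nu> (n k' - n k) u \<noteq> 0"
    and \<theta>: "\<theta> \<in> Rn (n k)" and u: "u \<in> Rn (n k' - n k)"
    and Tk: "diffeo (n k) (T k)" and Tk': "diffeo (n k') (T k')" and H: "diffeo (n k') (hbar k k')"
    and pk: "pushforward_dens (n k) (T k) (pic k) (prod_dens \<nu> (n k))"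
    and pk': "pushforward_dens (n k') (T k') (pic k') (prod_dens \<nu> (n k'))"
    and pH: "pushforward_dens (n k') (hbar k k') (prod_dens \<nu> (n k')) (prod_dens \<nu> (n k'))"
  shows "accept n piK pic j \<nu> T hbar k \<theta> u k' = 1"
proof -
  let ?h = "hmap n T hbar k k'"
  define v where "v = joinv (n k) \<theta> u"
  have v: "v \<in> Rn (n k')"
    unfolding v_def using joinv_in_Rn[OF up \<theta> u] .
  have h: "differentiable_Rn (n k') ?h"
    and push: "pushforward_dens (n k') ?h (dens_tensor (n k) (pic k) (prod_dens \<nu> (n k' - n k))) (pic k')"
    unfolding hmap_upward[where n = n and k = k and k' = k', OF up]
    by (rule pushforward_dens_upward_move[OF up Tk Tk' H pk pk' pH])+
  have hv: "?h v \<in> Rn (n k')"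
    using h v unfolding differentiable_Rn_def by blast
  have dens: "pic k \<theta> * prod_dens \<nu> (n k' - n k) u = pic k' (?h v) * \<bar>jacdet (n k') ?h v\<bar>"
    using bspec[OF push[unfolded pushforward_dens_def] v]
    by (simp add: dens_tensor_def v_def takev_joinv[OF \<theta>] dropv_joinv)
  show ?thesis
    by (rule accept_eq_one_if_balanced, rule bal, rule nz, rule refl)
      (use hv dens up in \<open>simp add: v_def takev_id max_absorb2 prod_dens_def\<close>)
qed

lemma accept_eq_one_downward:
  assumes down: "\<not> n k \<le> n k'"
    and bal: "piK k' * j k' k = piK k * j k k'"
    and nz: "piK k * pic k \<theta> * j k k' * prod_dens \<nu> (n k' - n k) u \<noteq> 0"
    and \<theta>: "\<theta> \<in> Rn (n k)" and u: "u \<in> Rn (n k' - n k)"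
    and Tk: "diffeo (n k) (T k)" and Tk': "diffeo (n k') (T k')" and H: "diffeo (n k) (hbar k' k)"
    and pk: "pushforward_dens (n k) (T k) (pic k) (prod_dens \<nu> (n k))"
    and pk': "pushforward_dens (n k') (T k') (pic k') (prod_dens \<nu> (n k'))"
    and pH: "pushforward_dens (n k) (hbar k' k) (prod_dens \<nu> (n k)) (prod_dens \<nu> (n k))"
  shows "accept n piK pic j \<nu> T hbar k \<theta> u k' = 1"
proof -
  let ?h = "hmap n T hbar k k'"
  have "n k' \<le> n k" using down by simp
  \<comment> \<open>the forward move draws no auxiliary variable: u is the empty vector\<close>
  have v: "joinv (n k) \<theta> u = \<theta>"
    using \<theta> u down unfolding joinv_def Rn_def by auto
  have "pushforward_dens (n k) ?h (pic k) (dens_tensor (n k') (pic k') (prod_dens \<nu> (n k - n k')))"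
    unfolding hmap_downward[where n = n and k = k and k' = k', OF down]
    by (rule pushforward_dens_downward_move[OF \<open>n k' \<le> n k\<close> Tk Tk' H pk pk' pH])
  then have dens: "pic k \<theta> = dens_tensor (n k') (pic k') (prod_dens \<nu> (n k - n k')) (?h \<theta>)
      * \<bar>jacdet (n k) ?h \<theta>\<bar>"
    using \<theta> unfolding pushforward_dens_def by blast
  show ?thesis
    by (rule accept_eq_one_if_balanced, rule bal, rule nz, rule refl)
      (use dens down in \<open>simp add: v dens_tensor_def max_absorb1 prod_dens_def\<close>)
qed

theorem corollary1:
  fixes K :: "'k set"
    and n :: "'k \<Rightarrow> nat"
    and \<Theta> :: "'k \<Rightarrow> (nat \<Rightarrow> real) set"
    and piK :: "'k \<Rightarrow> real"
    and pic :: "'k \<Rightarrow> (nat \<Rightarrow> real) \<Rightarrow> real"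
    and \<nu> :: "real \<Rightarrow> real"
    and T :: "'k \<Rightarrow> (nat \<Rightarrow> real) \<Rightarrow> (nat \<Rightarrow> real)"
    and hbar :: "'k \<Rightarrow> 'k \<Rightarrow> (nat \<Rightarrow> real) \<Rightarrow> (nat \<Rightarrow> real)"
    and j :: "'k \<Rightarrow> 'k \<Rightarrow> real"
    and k k' :: 'k
    and \<theta> u :: "nat \<Rightarrow> real"
  assumes K_countable: "countable K"
    and Theta_sub: "\<forall>k\<in>K. \<Theta> k \<subseteq> Rn (n k)"
    \<comment> \<open>pi(k) is a probability mass function on K\<close>
    and piK_nonneg: "\<forall>k\<in>K. piK k \<ge> 0"
    and piK_sum: "(piK has_sum 1) K"
    \<comment> \<open>pi_k is a probability density on Theta_k\<close>
    and pic_nonneg: "\<forall>k\<in>K. \<forall>x. pic k x \<ge> 0"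
    and pic_supp: "\<forall>k\<in>K. \<forall>x\<in>Rn (n k). x \<notin> \<Theta> k \<longrightarrow> pic k x = 0"
    and pic_meas: "\<forall>k\<in>K. (\<lambda>x. pic k (zpad (n k) x)) \<in> borel_measurable (Leb (n k))"
    and pic_norm: "\<forall>k\<in>K. (\<integral>\<^sup>+x. ennreal (pic k (zpad (n k) x)) \<partial>Leb (n k)) = 1"
    \<comment> \<open>nu is a univariate probability density\<close>
    and nu_nonneg: "\<forall>x. \<nu> x \<ge> 0"
    and nu_meas: "\<nu> \<in> borel_measurable borel"
    and nu_norm: "(\<integral>\<^sup>+x. ennreal (\<nu> x) \<partial>lborel) = 1"
    \<comment> \<open>T_k diffeomorphisms with T_k # pi_k = nu^(n_k)\<close>
    and T_diffeo: "\<forall>k\<in>K. diffeo (n k) (T k)"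
    and T_push: "\<forall>k\<in>K. pushforward_dens (n k) (T k) (pic k) (prod_dens \<nu> (n k))"
    \<comment> \<open>hbar_{k,k'} volume-preserving diffeomorphisms with hbar # nu^(n_k') = nu^(n_k')\<close>
    and hbar_diffeo: "\<forall>k1\<in>K. \<forall>k2\<in>K. n k1 \<le> n k2 \<longrightarrow> diffeo (n k2) (hbar k1 k2)"
    and hbar_vol: "\<forall>k1\<in>K. \<forall>k2\<in>K. n k1 \<le> n k2 \<longrightarrow> volume_preserving (n k2) (hbar k1 k2)"
    and hbar_push: "\<forall>k1\<in>K. \<forall>k2\<in>K. n k1 \<le> n k2 \<longrightarrow>
        pushforward_dens (n k2) (hbar k1 k2) (prod_dens \<nu> (n k2)) (prod_dens \<nu> (n k2))"
    \<comment> \<open>model jump distributions j_k on K\<close>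
    and j_nonneg: "\<forall>k1\<in>K. \<forall>k2\<in>K. j k1 k2 \<ge> 0"
    and j_sum: "\<forall>k1\<in>K. (j k1 has_sum 1) K"
    \<comment> \<open>balance condition on the model jumps\<close>
    and balance: "\<forall>k1\<in>K. \<forall>k2\<in>K. piK k2 * j k2 k1 = piK k1 * j k1 k2"
    \<comment> \<open>a proposed across-model move from x = (k, theta) with auxiliary draw u\<close>
    and k_in: "k \<in> K" and k'_in: "k' \<in> K" and across: "k' \<noteq> k"
    and theta_in: "\<theta> \<in> \<Theta> k"
    and x_supp: "piK k * pic k \<theta> > 0"
    and j_pos: "j k k' > 0"
    and u_in: "u \<in> Rn (n k' - n k)"
    and u_supp: "prod_dens \<nu> (n k' - n k) u > 0"
  shows "accept n piK pic j \<nu> T hbar k \<theta> u k' = 1"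
proof -
  have bal: "piK k' * j k' k = piK k * j k k'"
    using balance k_in k'_in by blast
  have nz: "piK k * pic k \<theta> * j k k' * prod_dens \<nu> (n k' - n k) u \<noteq> 0"
    using mult_pos_pos[OF mult_pos_pos[OF x_supp j_pos] u_supp] by linarith
  have \<theta>: "\<theta> \<in> Rn (n k)"
    using Theta_sub theta_in k_in by blast
  have T: "diffeo (n k) (T k)" "diffeo (n k') (T k')"
    "pushforward_dens (n k) (T k) (pic k) (prod_dens \<nu> (n k))"
    "pushforward_dens (n k') (T k') (pic k') (prod_dens \<nu> (n k'))"
    using T_diffeo T_push k_in k'_in by blast+
  show ?thesis
  proof (cases "n k \<le> n k'")
    case True
    then have H: "diffeo (n k') (hbar k k')"
      "pushforward_dens (n k') (hbar k k') (prod_dens \<nu> (n k')) (prod_dens \<nu> (n k'))"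
      using hbar_diffeo hbar_push k_in k'_in by blast+
    show ?thesis
      by (rule accept_eq_one_upward) (fact True bal nz \<theta> u_in T H)+
  next
    case False
    then have H: "diffeo (n k) (hbar k' k)"
      "pushforward_dens (n k) (hbar k' k) (prod_dens \<nu> (n k)) (prod_dens \<nu> (n k))"
      using hbar_diffeo hbar_push k_in k'_in by simp_all
    show ?thesis
      by (rule accept_eq_one_downward) (fact False bal nz \<theta> u_in T H)+
  qed
qed

end
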